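(* Let $\mu$ be a fuzzy subset of a fuzzy $\Gamma$-hypersemigroup $(M,\circ)$ and let $\nu$ be a fuzzy $\Gamma$-hyper bi-ideal of $(M,\circ)$. Then for every $\gamma\in\Gamma$, both $\mu\circ\gamma\circ\nu$ and $\nu\circ\gamma\circ\mu$ are fuzzy $\Gamma$-hyper bi-ideals of $(M,\circ)$.
   Context: $M,\Gamma$ are nonempty sets; a fuzzy subset of $M$ is a map $M\to[0,1]$. A fuzzy $\Gamma$-hyperoperation assigns to each $(a,\gamma,b)\in M\times\Gamma\times M$ a fuzzy subset $a\circ\gamma\circ b$. For $a\in M$ and fuzzy $\mu$: $(a\circ\gamma\circ\mu)(r)=\bigvee_{t\in M}((a\circ\gamma\circ t)(r)\wedge\mu(t))$ if $\mu\ne0$, else $0$; $(\mu\circ\gamma\circ a)(r)=\bigvee_{t\in M}(\mu(t)\wedge(t\circ\gamma\circ a)(r))$ if $\mu\ne0$, else $0$. For fuzzy $\mu,\nu$: $(\mu\circ\gamma\circ\nu)(t)=\bigvee_{p,q\in M}(\mu(p)\wedge(p\circ\gamma\circ q)(t)\wedge\nu(q))$. $(M,\circ)$ is a fuzzy $\Gamma$-hypersemigroup if $(a\circ\alpha\circ b)\circ\beta\circ c=a\circ\alpha\circ(b\circ\beta\circ c)$ for all $a,b,c\in M$, $\alpha,\beta\in\Gamma$. For fuzzy sets, $\mu\subseteq\nu$ means $\mu(x)\le\nu(x)$ for all $x$. A fuzzy sub $\Gamma$-hypersemigroup is a fuzzy subset $\mu$ with $\mu\circ\gamma\circ\mu\subseteq\mu$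 for all $\gamma\in\Gamma$. A fuzzy $\Gamma$-hyper bi-ideal is a fuzzy sub $\Gamma$-hypersemigroup $\mu$ with $(\mu\circ\alpha\circ y)\circ\beta\circ\mu\subseteq\mu$ for all $y\in M$, $\alpha,\beta\in\Gamma$. *)

theory Defs
  imports Main "HOL.Real"
begin

text \<open>M and Gamma are modelled as (nonempty) types 'm and 'g. A fuzzy subset of M
is a real-valued function with values in [0,1]; suprema are real suprema (SUP),
which are well defined since all values involved lie in [0,1].\<close>

definition fuzzy :: "('m \<Rightarrow> real) \<Rightarrow> bool" where
  "fuzzy \<mu> \<longleftrightarrow> (\<forall>x. 0 \<le> \<mu> x \<and> \<mu> x \<le> 1)"

type_synonym ('m, 'g) fhop = "'m \<Rightarrow> 'g \<Rightarrow> 'm \<Rightarrow> ('m \<Rightarrow> real)"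

definition fuzzy_hyperop :: "('m, 'g) fhop \<Rightarrow> bool" where
  "fuzzy_hyperop hop \<longleftrightarrow> (\<forall>a g b. fuzzy (hop a g b))"

definition elem_fz :: "('m, 'g) fhop \<Rightarrow> 'm \<Rightarrow> 'g \<Rightarrow> ('m \<Rightarrow> real) \<Rightarrow> ('m \<Rightarrow> real)" where
  "elem_fz hop a \<gamma> \<mu> =
     (if \<mu> = (\<lambda>_. 0) then (\<lambda>_. 0) else (\<lambda>r. SUP t. min (hop a \<gamma> t r) (\<mu> t)))"

definition fz_elem :: "('m, 'g) fhop \<Rightarrow> ('m \<Rightarrow> real) \<Rightarrow> 'g \<Rightarrow> 'm \<Rightarrow> ('m \<Rightarrow> real)" where
  "fz_elem hop \<mu> \<gamma> a =
     (if \<mu> = (\<lambda>_. 0) then (\<lambda>_. 0) else (\<lambda>r. SUP t. min (\<mu> t) (hop t \<gamma> a r)))"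

definition fz_fz :: "('m, 'g) fhop \<Rightarrow> ('m \<Rightarrow> real) \<Rightarrow> 'g \<Rightarrow> ('m \<Rightarrow> real) \<Rightarrow> ('m \<Rightarrow> real)" where
  "fz_fz hop \<mu> \<gamma> \<nu> = (\<lambda>t. SUP pq. min (min (\<mu> (fst pq)) (hop (fst pq) \<gamma> (snd pq) t)) (\<nu> (snd pq)))"

definition fuzzy_subset_le :: "('m \<Rightarrow> real) \<Rightarrow> ('m \<Rightarrow> real) \<Rightarrow> bool" where
  "fuzzy_subset_le \<mu> \<nu> \<longleftrightarrow> (\<forall>x. \<mu> x \<le> \<nu> x)"

definition fuzzy_Gamma_hypersemigroup :: "('m, 'g) fhop \<Rightarrow> bool" where
  "fuzzy_Gamma_hypersemigroup hop \<longleftrightarrow> fuzzy_hyperop hop \<and>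
     (\<forall>a b c \<alpha> \<beta>. fz_elem hop (hop a \<alpha> b) \<beta> c = elem_fz hop a \<alpha> (hop b \<beta> c))"

definition fuzzy_sub_Gamma_hypersemigroup :: "('m, 'g) fhop \<Rightarrow> ('m \<Rightarrow> real) \<Rightarrow> bool" where
  "fuzzy_sub_Gamma_hypersemigroup hop \<mu> \<longleftrightarrow> fuzzy \<mu> \<and>
     (\<forall>\<gamma>. fuzzy_subset_le (fz_fz hop \<mu> \<gamma> \<mu>) \<mu>)"

definition fuzzy_Gamma_hyper_bi_ideal :: "('m, 'g) fhop \<Rightarrow> ('m \<Rightarrow> real) \<Rightarrow> bool" where
  "fuzzy_Gamma_hyper_bi_ideal hop \<mu> \<longleftrightarrow> fuzzy_sub_Gamma_hypersemigroup hop \<mu> \<and>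
     (\<forall>y \<alpha> \<beta>. fuzzy_subset_le (fz_fz hop (fz_elem hop \<mu> \<alpha> y) \<beta> \<mu>) \<mu>)"

end

theory Submission
  imports Defs "HOL-Library.Indicator_Function"
begin

text \<open>Composition of fuzzy subsets is associative, because the
pointwise associativity of the hyperoperation can be pushed through the suprema; it is monotone
in each argument; and the product with an element \<open>y\<close> is the product with the fuzzy point
\<open>indicator {y}\<close>. For \<open>P = \<mu> \<circ>\<gamma>\<circ> \<nu>\<close> associativity rewrites \<open>P \<circ>\<delta>\<circ> P\<close> and
\<open>(P \<circ>\<alpha>\<circ> y) \<circ>\<beta>\<circ> P\<close> as \<open>\<mu> \<circ>\<gamma>\<circ> ((\<nu> \<circ>\<alpha>\<circ> \<kappa>) \<circ>\<gamma>\<circ> \<nu>)\<close> for a suitable \<open>\<kappa>\<close>,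
and the bi-ideal \<open>\<nu>\<close> absorbs \<open>(\<nu> \<circ>\<alpha>\<circ> \<kappa>) \<circ>\<gamma>\<circ> \<nu>\<close> for every \<open>\<kappa>\<close>, not only for
points.\<close>

lemma SUP_UNIV_le_real: "(\<And>i. f i \<le> c) \<Longrightarrow> (SUP i. f i) \<le> (c::real)"
  by (rule cSUP_least) auto

lemma le_SUP_UNIV_real: "(\<And>i. f i \<le> B) \<Longrightarrow> x \<le> f i \<Longrightarrow> x \<le> (SUP i. f i::real)"
  by (meson bdd_aboveI2 cSUP_upper2 UNIV_I)

lemma min_SUP_le_real:
  assumes "\<And>i. min (f i) a \<le> (c::real)"
  shows "min (SUP i. f i) a \<le> c"
proof (rule ccontr)
  assume "\<not> ?thesis"
  then have c: "c < min (SUP i. f i) a" by linarith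
  have "f i \<le> c" for i using assms[of i] c by (auto simp: min_def split: if_splits)
  then have "(SUP i. f i) \<le> c" by (rule SUP_UNIV_le_real)
  with c show False by simp
qed

lemma SUP_swap_real: "(SUP x. f (prod.swap x)) = (SUP x. (f x::real))"
  using image_image[of f prod.swap UNIV] by (simp add: surj_swap)

lemma fuzzy_hyperopD:
  assumes "fuzzy_hyperop h"
  shows "0 \<le> h a \<gamma> b x" and "h a \<gamma> b x \<le> 1"
  using assms by (auto simp: fuzzy_hyperop_def fuzzy_def)

lemma fuzzy_fz_fz:
  assumes h: "fuzzy_hyperop h" and "fuzzy A" and "fuzzy B"
  shows "fuzzy (fz_fz h A \<gamma> B)"
  unfolding fuzzy_def fz_fz_def
proof (intro allI conjI)
  fix t
  show "0 \<le> (SUP pq. min (min (A (fst pq)) (h (fst pq) \<gamma> (snd pq) t)) (B (snd pq)))"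
    using assms fuzzy_hyperopD[OF h]
    by (intro le_SUP_UNIV_real[where B=1 and i=undefined]) (auto simp: fuzzy_def min_le_iff_disj)
  show "(SUP pq. min (min (A (fst pq)) (h (fst pq) \<gamma> (snd pq) t)) (B (snd pq))) \<le> 1"
    using fuzzy_hyperopD[OF h] by (intro SUP_UNIV_le_real) (auto simp: min_le_iff_disj)
qed

text \<open>The special clause for the empty fuzzy set in \<open>fz_elem\<close> and \<open>elem_fz\<close>
is redundant for nonnegative data: the supremum is then \<open>0\<close> anyway.\<close>

lemma fz_elem_eq_SUP:
  assumes "fuzzy_hyperop h" and "\<And>x. 0 \<le> A x"
  shows "fz_elem h A \<gamma> a r = (SUP t. min (A t) (h t \<gamma> a r))"
proof (cases "A = (\<lambda>_. 0)")
  case True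
  then show ?thesis using fuzzy_hyperopD[OF assms(1)] by (simp add: fz_elem_def min.absorb1)
qed (simp add: fz_elem_def)

lemma elem_fz_eq_SUP:
  assumes "fuzzy_hyperop h" and "\<And>x. 0 \<le> A x"
  shows "elem_fz h a \<gamma> A r = (SUP t. min (h a \<gamma> t r) (A t))"
proof (cases "A = (\<lambda>_. 0)")
  case True
  then show ?thesis using fuzzy_hyperopD[OF assms(1)] by (simp add: elem_fz_def min.absorb2)
qed (simp add: elem_fz_def)

lemma hypersemigroup_SUP_assoc:
  assumes hs: "fuzzy_Gamma_hypersemigroup h"
  shows "(SUP t. min (h a \<alpha> b t) (h t \<beta> c r)) = (SUP t. min (h a \<alpha> t r) (h b \<beta> c t))"
proof -
  have h: "fuzzy_hyperop h" and assoc: "fz_elem h (h a \<alpha> b) \<beta> c = elem_fz h a \<alpha> (h b \<beta> c)"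
    using hs by (auto simp: fuzzy_Gamma_hypersemigroup_def)
  from assoc have "fz_elem h (h a \<alpha> b) \<beta> c r = elem_fz h a \<alpha> (h b \<beta> c) r" by simp
  then show ?thesis
    by (simp add: fz_elem_eq_SUP[OF h] elem_fz_eq_SUP[OF h] fuzzy_hyperopD[OF h])
qed

lemma fz_fz_assoc_le:
  assumes h: "fuzzy_hyperop h"
    and assoc_le: "\<And>a b c s r. min (h a \<alpha> b s) (h s \<beta> c r) \<le> (SUP t. min (h a \<alpha> t r) (h b \<beta> c t))"
  shows "fz_fz h (fz_fz h A \<alpha> B) \<beta> C r \<le> fz_fz h A \<alpha> (fz_fz h B \<beta> C) r"
proof -
  note h01 = fuzzy_hyperopD[OF h]
  let ?R = "fz_fz h A \<alpha> (fz_fz h B \<beta> C) r"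
  have through_t: "min (min (min (A a) (B b)) (C c)) (min (h a \<alpha> t r) (h b \<beta> c t)) \<le> ?R"
    for a b c t
  proof -
    have "min (min (min (A a) (B b)) (C c)) (min (h a \<alpha> t r) (h b \<beta> c t))
        = min (min (A a) (h a \<alpha> t r)) (min (min (B b) (h b \<beta> c t)) (C c))"
      by (simp add: min.commute min.left_commute min.assoc)
    also have "\<dots> \<le> min (min (A a) (h a \<alpha> t r)) (fz_fz h B \<beta> C t)"
      unfolding fz_fz_def
      by (intro min.mono order.refl le_SUP_UNIV_real[where B=1 and i="(b, c)"])
        (auto simp: h01 min_le_iff_disj)
    also have "\<dots> \<le> ?R"
      unfolding fz_fz_def[of h A]
      by (rule le_SUP_UNIV_real[where B=1 and i="(a, t)"]) (auto simp: h01 min_le_iff_disj)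
    finally show ?thesis .
  qed
  have through_s: "min (min (min (A a) (h a \<alpha> b s)) (B b)) (min (h s \<beta> c r) (C c)) \<le> ?R"
    for a b c s
  proof -
    have "min (SUP t. min (h a \<alpha> t r) (h b \<beta> c t)) (min (min (A a) (B b)) (C c)) \<le> ?R"
      using through_t by (intro min_SUP_le_real) (simp add: min.commute)
    with assoc_le[of a b s c r] show ?thesis by (smt (verit) min_def)
  qed
  show ?thesis
    unfolding fz_fz_def[of h "fz_fz h A \<alpha> B"]
  proof (rule SUP_UNIV_le_real)
    fix sc :: "'a \<times> 'a"
    obtain s c where sc: "sc = (s, c)" by (cases sc)
    have "min (fz_fz h A \<alpha> B s) (min (h s \<beta> c r) (C c)) \<le> ?R"
      unfolding fz_fz_def[of h A \<alpha> B]
      using through_s by (intro min_SUP_le_real) simp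
    then show "min (min (fz_fz h A \<alpha> B (fst sc)) (h (fst sc) \<beta> (snd sc) r)) (C (snd sc)) \<le> ?R"
      by (simp add: sc min.assoc)
  qed
qed

definition rev_hop :: "('m, 'g) fhop \<Rightarrow> ('m, 'g) fhop" where
  "rev_hop h = (\<lambda>a \<gamma> b. h b \<gamma> a)"

lemma fz_fz_rev_hop: "fz_fz (rev_hop h) X \<gamma> Y = fz_fz h Y \<gamma> X"
proof
  fix t
  have "fz_fz (rev_hop h) X \<gamma> Y t =
      (SUP pq. (\<lambda>pq. min (min (Y (fst pq)) (h (fst pq) \<gamma> (snd pq) t)) (X (snd pq))) (prod.swap pq))"
    unfolding fz_fz_def rev_hop_def by (simp add: min.commute min.left_commute)
  also have "\<dots> = fz_fz h Y \<gamma> X t"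
    unfolding fz_fz_def by (rule SUP_swap_real)
  finally show "fz_fz (rev_hop h) X \<gamma> Y t = fz_fz h Y \<gamma> X t" .
qed

text \<open>The reverse inequality is \<open>fz_fz_assoc_le\<close> for the reversed hyperoperation.\<close>

lemma fz_fz_assoc:
  assumes hs: "fuzzy_Gamma_hypersemigroup h"
  shows "fz_fz h (fz_fz h A \<alpha> B) \<beta> C = fz_fz h A \<alpha> (fz_fz h B \<beta> C)"
proof
  fix r
  have h: "fuzzy_hyperop h" using hs by (simp add: fuzzy_Gamma_hypersemigroup_def)
  then have h_rev: "fuzzy_hyperop (rev_hop h)" by (simp add: fuzzy_hyperop_def rev_hop_def)
  note h01 = fuzzy_hyperopD[OF h]
  have "min (h a \<alpha> b s) (h s \<beta> c r) \<le> (SUP t. min (h a \<alpha> t r) (h b \<beta> c t))" for a b c s r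
    unfolding hypersemigroup_SUP_assoc[OF hs, symmetric]
    by (rule le_SUP_UNIV_real[where B=1 and i=s]) (auto simp: h01 min_le_iff_disj)
  then have "fz_fz h (fz_fz h A \<alpha> B) \<beta> C r \<le> fz_fz h A \<alpha> (fz_fz h B \<beta> C) r"
    by (rule fz_fz_assoc_le[OF h])
  moreover have
    "min (rev_hop h a \<beta> b s) (rev_hop h s \<alpha> c r) \<le> (SUP t. min (rev_hop h a \<beta> t r) (rev_hop h b \<alpha> c t))"
    for a b c s r
  proof -
    have "min (h b \<beta> a s) (h c \<alpha> s r) \<le> (SUP t. min (h c \<alpha> t r) (h b \<beta> a t))"
      by (rule le_SUP_UNIV_real[where B=1 and i=s]) (auto simp: h01 min_le_iff_disj min.commute)
    also have "\<dots> = (SUP t. min (h t \<beta> a r) (h c \<alpha> b t))"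
      using hypersemigroup_SUP_assoc[OF hs, of c \<alpha> b \<beta> a r] by (simp add: min.commute)
    finally show ?thesis unfolding rev_hop_def .
  qed
  then have "fz_fz (rev_hop h) (fz_fz (rev_hop h) C \<beta> B) \<alpha> A r
      \<le> fz_fz (rev_hop h) C \<beta> (fz_fz (rev_hop h) B \<alpha> A) r"
    by (rule fz_fz_assoc_le[OF h_rev])
  ultimately show "fz_fz h (fz_fz h A \<alpha> B) \<beta> C r = fz_fz h A \<alpha> (fz_fz h B \<beta> C) r"
    by (simp add: fz_fz_rev_hop)
qed

lemma fz_fz_mono_left:
  assumes h: "fuzzy_hyperop h" and le: "\<And>x. A x \<le> A' x"
  shows "fz_fz h A \<gamma> B t \<le> fz_fz h A' \<gamma> B t"
  unfolding fz_fz_def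
proof (rule SUP_UNIV_le_real)
  fix pq :: "'a \<times> 'a"
  show "min (min (A (fst pq)) (h (fst pq) \<gamma> (snd pq) t)) (B (snd pq))
    \<le> (SUP pq. min (min (A' (fst pq)) (h (fst pq) \<gamma> (snd pq) t)) (B (snd pq)))"
    using le[of "fst pq"] fuzzy_hyperopD[OF h]
    by (intro le_SUP_UNIV_real[where B=1 and i=pq]) (auto simp: min_le_iff_disj min.bounded_iff)
qed

lemma fz_fz_mono_right:
  assumes h: "fuzzy_hyperop h" and le: "\<And>x. B x \<le> B' x"
  shows "fz_fz h A \<gamma> B t \<le> fz_fz h A \<gamma> B' t"
  unfolding fz_fz_def
proof (rule SUP_UNIV_le_real)
  fix pq :: "'a \<times> 'a"
  show "min (min (A (fst pq)) (h (fst pq) \<gamma> (snd pq) t)) (B (snd pq))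
    \<le> (SUP pq. min (min (A (fst pq)) (h (fst pq) \<gamma> (snd pq) t)) (B' (snd pq)))"
    using le[of "snd pq"] fuzzy_hyperopD[OF h]
    by (intro le_SUP_UNIV_real[where B=1 and i=pq]) (auto simp: min_le_iff_disj min.bounded_iff)
qed

lemma fz_elem_eq_fz_fz_indicator:
  assumes h: "fuzzy_hyperop h" and A: "fuzzy A"
  shows "fz_elem h A \<gamma> y = fz_fz h A \<gamma> (indicator {y})"
proof
  fix t
  have A0: "0 \<le> A x" for x using A by (simp add: fuzzy_def)
  note h01 = fuzzy_hyperopD[OF h]
  have "(SUP p. min (A p) (h p \<gamma> y t)) \<le> fz_fz h A \<gamma> (indicator {y}) t"
    unfolding fz_fz_def
  proof (rule SUP_UNIV_le_real)
    fix p
    show "min (A p) (h p \<gamma> y t)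
        \<le> (SUP pq. min (min (A (fst pq)) (h (fst pq) \<gamma> (snd pq) t)) (indicator {y} (snd pq)))"
      by (rule le_SUP_UNIV_real[where B=1 and i="(p, y)"]) (auto simp: h01 min_le_iff_disj)
  qed
  moreover have "fz_fz h A \<gamma> (indicator {y}) t \<le> (SUP p. min (A p) (h p \<gamma> y t))"
    unfolding fz_fz_def
  proof (rule SUP_UNIV_le_real)
    fix pq :: "'a \<times> 'a"
    obtain p q where pq: "pq = (p, q)" by (cases pq)
    have "0 \<le> (SUP p. min (A p) (h p \<gamma> y t))"
      by (rule le_SUP_UNIV_real[where B=1 and i=undefined]) (auto simp: A0 h01 min_le_iff_disj)
    moreover have "min (A p) (h p \<gamma> y t) \<le> (SUP p. min (A p) (h p \<gamma> y t))"
      by (rule le_SUP_UNIV_real[where B=1]) (auto simp: h01 min_le_iff_disj)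
    ultimately show "min (min (A (fst pq)) (h (fst pq) \<gamma> (snd pq) t)) (indicator {y} (snd pq))
        \<le> (SUP p. min (A p) (h p \<gamma> y t))"
      by (cases "q = y") (auto simp: pq min_def)
  qed
  ultimately show "fz_elem h A \<gamma> y t = fz_fz h A \<gamma> (indicator {y}) t"
    using fz_elem_eq_SUP[OF h A0] by simp
qed

lemma bi_ideal_absorbs:
  assumes h: "fuzzy_hyperop h" and bi: "fuzzy_Gamma_hyper_bi_ideal h \<nu>"
  shows "fz_fz h (fz_fz h \<nu> \<alpha> \<kappa>) \<beta> \<nu> r \<le> \<nu> r"
proof -
  have \<nu>0: "0 \<le> \<nu> x" for x
    using bi by (simp add: fuzzy_Gamma_hyper_bi_ideal_def fuzzy_sub_Gamma_hypersemigroup_def fuzzy_def)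
  note h01 = fuzzy_hyperopD[OF h]
  have point: "fz_fz h (fz_elem h \<nu> \<alpha> z) \<beta> \<nu> x \<le> \<nu> x" for z x
    using bi by (auto simp: fuzzy_Gamma_hyper_bi_ideal_def fuzzy_subset_le_def)
  have chain: "min (min (min (\<nu> p) (h p \<alpha> z s)) (\<kappa> z)) (min (h s \<beta> q r) (\<nu> q)) \<le> \<nu> r"
    for p z s q
  proof -
    have "min (\<nu> p) (h p \<alpha> z s) \<le> fz_elem h \<nu> \<alpha> z s"
      unfolding fz_elem_eq_SUP[OF h \<nu>0]
      by (rule le_SUP_UNIV_real[where B=1]) (auto simp: h01 min_le_iff_disj)
    moreover have "min (min (fz_elem h \<nu> \<alpha> z s) (h s \<beta> q r)) (\<nu> q) \<le> fz_fz h (fz_elem h \<nu> \<alpha> z) \<beta> \<nu> r"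
      unfolding fz_fz_def
      by (rule le_SUP_UNIV_real[where B=1 and i="(s, q)"]) (auto simp: h01 min_le_iff_disj)
    ultimately show ?thesis
      using point[of z r] by (smt (verit) min_def)
  qed
  show ?thesis
    unfolding fz_fz_def[of h "fz_fz h \<nu> \<alpha> \<kappa>"]
  proof (rule SUP_UNIV_le_real)
    fix sq :: "'a \<times> 'a"
    obtain s q where sq: "sq = (s, q)" by (cases sq)
    have "min (fz_fz h \<nu> \<alpha> \<kappa> s) (min (h s \<beta> q r) (\<nu> q)) \<le> \<nu> r"
      unfolding fz_fz_def[of h \<nu>]
      using chain by (intro min_SUP_le_real) simp
    then show "min (min (fz_fz h \<nu> \<alpha> \<kappa> (fst sq)) (h (fst sq) \<beta> (snd sq) r)) (\<nu> (snd sq)) \<le> \<nu> r"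
      by (simp add: sq min.assoc)
  qed
qed

lemma bi_ideal_fz_fz_left:
  assumes hs: "fuzzy_Gamma_hypersemigroup h" and \<mu>: "fuzzy \<mu>"
    and bi: "fuzzy_Gamma_hyper_bi_ideal h \<nu>"
  shows "fuzzy_Gamma_hyper_bi_ideal h (fz_fz h \<mu> \<gamma> \<nu>)"
proof -
  have h: "fuzzy_hyperop h" using hs by (simp add: fuzzy_Gamma_hypersemigroup_def)
  have \<nu>: "fuzzy \<nu>"
    using bi by (simp add: fuzzy_Gamma_hyper_bi_ideal_def fuzzy_sub_Gamma_hypersemigroup_def)
  note fuzzy = \<mu> \<nu> fuzzy_fz_fz[OF h]
  let ?P = "fz_fz h \<mu> \<gamma> \<nu>"
  have absorb: "fz_fz h \<mu> \<gamma> (fz_fz h (fz_fz h \<nu> \<alpha> \<kappa>) \<gamma> \<nu>) x \<le> ?P x" for \<alpha> \<kappa> x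
    by (rule fz_fz_mono_right[OF h bi_ideal_absorbs[OF h bi]])
  have "fz_fz h ?P \<delta> ?P = fz_fz h \<mu> \<gamma> (fz_fz h (fz_fz h \<nu> \<delta> \<mu>) \<gamma> \<nu>)" for \<delta>
    by (simp add: fz_fz_assoc[OF hs] fuzzy)
  moreover have "fz_fz h (fz_elem h ?P \<alpha> y) \<beta> ?P
      = fz_fz h \<mu> \<gamma> (fz_fz h (fz_fz h \<nu> \<alpha> (fz_fz h (indicator {y}) \<beta> \<mu>)) \<gamma> \<nu>)" for \<alpha> \<beta> y
    by (simp add: fz_elem_eq_fz_fz_indicator[OF h] fz_fz_assoc[OF hs] fuzzy)
  ultimately show ?thesis
    using absorb fuzzy
    by (simp add: fuzzy_Gamma_hyper_bi_ideal_def fuzzy_sub_Gamma_hypersemigroup_def fuzzy_subset_le_def)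
qed

lemma bi_ideal_fz_fz_right:
  assumes hs: "fuzzy_Gamma_hypersemigroup h" and \<mu>: "fuzzy \<mu>"
    and bi: "fuzzy_Gamma_hyper_bi_ideal h \<nu>"
  shows "fuzzy_Gamma_hyper_bi_ideal h (fz_fz h \<nu> \<gamma> \<mu>)"
proof -
  have h: "fuzzy_hyperop h" using hs by (simp add: fuzzy_Gamma_hypersemigroup_def)
  have \<nu>: "fuzzy \<nu>"
    using bi by (simp add: fuzzy_Gamma_hyper_bi_ideal_def fuzzy_sub_Gamma_hypersemigroup_def)
  note fuzzy = \<mu> \<nu> fuzzy_fz_fz[OF h]
  let ?Q = "fz_fz h \<nu> \<gamma> \<mu>"
  have absorb: "fz_fz h (fz_fz h (fz_fz h \<nu> \<alpha> \<kappa>) \<beta> \<nu>) \<gamma> \<mu> x \<le> ?Q x" for \<alpha> \<beta> \<kappa> x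
    by (rule fz_fz_mono_left[OF h bi_ideal_absorbs[OF h bi]])
  have "fz_fz h ?Q \<delta> ?Q = fz_fz h (fz_fz h (fz_fz h \<nu> \<gamma> \<mu>) \<delta> \<nu>) \<gamma> \<mu>" for \<delta>
    by (simp add: fz_fz_assoc[OF hs] fuzzy)
  moreover have "fz_fz h (fz_elem h ?Q \<alpha> y) \<beta> ?Q
      = fz_fz h (fz_fz h (fz_fz h \<nu> \<gamma> (fz_fz h \<mu> \<alpha> (indicator {y}))) \<beta> \<nu>) \<gamma> \<mu>" for \<alpha> \<beta> y
    by (simp add: fz_elem_eq_fz_fz_indicator[OF h] fz_fz_assoc[OF hs] fuzzy)
  ultimately show ?thesis
    using absorb fuzzy
    by (simp add: fuzzy_Gamma_hyper_bi_ideal_def fuzzy_sub_Gamma_hypersemigroup_def fuzzy_subset_le_def)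
qed

theorem theorem4p14:
  fixes hop :: "('m, 'g) fhop" and \<mu> \<nu> :: "'m \<Rightarrow> real"
  assumes "fuzzy_Gamma_hypersemigroup hop"
    and "fuzzy \<mu>"
    and "fuzzy_Gamma_hyper_bi_ideal hop \<nu>"
  shows "\<forall>\<gamma>. fuzzy_Gamma_hyper_bi_ideal hop (fz_fz hop \<mu> \<gamma> \<nu>) \<and>
              fuzzy_Gamma_hyper_bi_ideal hop (fz_fz hop \<nu> \<gamma> \<mu>)"
  using bi_ideal_fz_fz_left[OF assms] bi_ideal_fz_fz_right[OF assms] by blast

end
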